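(* Let $p\ge1$ and $z$ be integers with $1\le z\le 2p-1$, $Z=\{-z+1,\dots,2p-z\}$, $Z'=\{-z,\dots,2p-z\}$. Let $h$ be an entropy conservative, symmetric, consistent and smooth two-point flux with entropy flux $H$, and let $A=(A_{lm})_{l,m\in Z}$, $B=(B_{lm})_{l,m\in Z'}$ be real matrices inducing an entropy conservative flux combination, i.e. with $\tilde A_{lm}:=A_{l+1,m+1}$ if $l+1,m+1\in Z$ and $\tilde A_{lm}:=0$ otherwise ($l,m\in Z'$), and $v_m:=(B_{0m}-\tilde A_{0m})+(B_{m0}-\tilde A_{m0})$: $\sum_{l,m\in Z'}\tilde A_{lm}=\sum_{l,m\in Z'}B_{lm}=1$, $\tilde A_{lm}=B_{lm}$ for $l,m\in Z'\setminus\{0\}$, $A_{ll}=0$ for $l\in Z$, and $v_0=0$. Let $g$ be an entropy dissipative two-point flux with entropy flux $G$, let $\alpha\in[0,1]$, and assume $A_{01}\ge0$, $A_{10}\ge0$, $B_{01}\ge0$, $B_{10}\ge0$. Define the families $$\varphi_{lm}(a,b)=\begin{cases}\alpha g(a,b)+(1-\alpha)h(a,b),&(l,m)=(0,1),\\ \alpha g(b,a)+(1-\alpha)h(a,b),&(l,m)=(1,0),\\ h(a,b),&\text{otherwise},\end{cases}\qquad \Phi_{lm}(a,b)=\begin{cases}\alpha G(a,b)+(1-\alpha)H(a,b),&(l,m)=(0,1),\\ \alpha G(b,a)+(1-\alpha)H(a,b),&(l,m)=(1,0),\\ H(a,b),&\text{otherwise},\end{cases}$$ and the general linear combined fluxes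 $$f_{k-\frac12}=\sum_{l,m\in Z}A_{lm}\varphi_{lm}(u_{k-1+l},u_{k-1+m}),\qquad f_{k+\frac12}=\sum_{l,m\in Z'}B_{lm}\varphi_{lm}(u_{k+l},u_{k+m}),$$ with $F_{k\pm\frac12}$ defined identically with $\Phi_{lm}$ in place of $\varphi_{lm}$. Then the resulting flux is entropy dissipative with numerical entropy flux $F$: for all states, $v(u_k)\cdot(f_{k-\frac12}-f_{k+\frac12})\le F_{k-\frac12}-F_{k+\frac12}$, so that along solutions of $\frac{\mathrm{d}u_k}{\mathrm{d}t}=\frac1{\Delta x}(f_{k-\frac12}-f_{k+\frac12})$ one has $\frac{\mathrm{d}}{\mathrm{d}t}U(u_k)\le\frac1{\Delta x}(F_{k-\frac12}-F_{k+\frac12})$.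
   Context: Conservation law $\partial_t u+\partial_x f(u)=0$, $u\in\mathbb{R}^N$, with smooth strictly convex entropy $U$, entropy flux $F$, entropy variable $v(u)=\nabla U(u)$, potential $\psi(u)=v(u)\cdot f(u)-F(u)$. A two-point flux $h$ is symmetric if $h(a,b)=h(b,a)$, consistent if $h(a,a)=f(a)$, entropy conservative if $(v(b)-v(a))\cdot h(a,b)=\psi(b)-\psi(a)$ for all $a,b$, with entropy flux $H(a,b)=\tfrac12(v(a)+v(b))\cdot h(a,b)-\tfrac12(\psi(a)+\psi(b))$. A two-point flux $g$ is entropy dissipative if $(v(b)-v(a))\cdot g(a,b)-(\psi(b)-\psi(a))\le0$ for all $a,b$, with entropy flux $G(a,b)=\tfrac12(v(a)+v(b))\cdot g(a,b)-\tfrac12(\psi(a)+\psi(b))$. Uniform mesh width $\Delta x$. *)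

theory Defs
  imports "HOL-Analysis.Analysis"
begin

text \<open>States u live in a Euclidean space 'a (playing the role of R^N).
  v is the entropy variable (gradient of U), psi the entropy potential.\<close>

definition strictly_convex_on :: "'a::real_vector set \<Rightarrow> ('a \<Rightarrow> real) \<Rightarrow> bool" where
  "strictly_convex_on S U \<longleftrightarrow> convex S \<and>
     (\<forall>x\<in>S. \<forall>y\<in>S. \<forall>t. x \<noteq> y \<and> 0 < t \<and> t < 1 \<longrightarrow>
        U ((1 - t) *\<^sub>R x + t *\<^sub>R y) < (1 - t) * U x + t * U y)"

definition potential :: "('a::real_inner \<Rightarrow> 'a) \<Rightarrow> ('a \<Rightarrow> 'a) \<Rightarrow> ('a \<Rightarrow> real) \<Rightarrow> 'a \<Rightarrow> real" where
  "potential v f F u = v u \<bullet> f u - F u"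

definition symmetric_flux :: "('a \<Rightarrow> 'a \<Rightarrow> 'b) \<Rightarrow> bool" where
  "symmetric_flux h \<longleftrightarrow> (\<forall>a b. h a b = h b a)"

definition consistent_flux :: "('a \<Rightarrow> 'b) \<Rightarrow> ('a \<Rightarrow> 'a \<Rightarrow> 'b) \<Rightarrow> bool" where
  "consistent_flux f h \<longleftrightarrow> (\<forall>a. h a a = f a)"

definition entropy_conservative ::
  "('a::real_inner \<Rightarrow> 'a) \<Rightarrow> ('a \<Rightarrow> real) \<Rightarrow> ('a \<Rightarrow> 'a \<Rightarrow> 'a) \<Rightarrow> bool" where
  "entropy_conservative v psi h \<longleftrightarrow> (\<forall>a b. (v b - v a) \<bullet> h a b = psi b - psi a)"

definition entropy_dissipative ::
  "('a::real_inner \<Rightarrow> 'a) \<Rightarrow> ('a \<Rightarrow> real) \<Rightarrow> ('a \<Rightarrow> 'a \<Rightarrow> 'a) \<Rightarrow> bool" where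
  "entropy_dissipative v psi g \<longleftrightarrow> (\<forall>a b. (v b - v a) \<bullet> g a b - (psi b - psi a) \<le> 0)"

definition two_point_entropy_flux ::
  "('a::real_inner \<Rightarrow> 'a) \<Rightarrow> ('a \<Rightarrow> real) \<Rightarrow> ('a \<Rightarrow> 'a \<Rightarrow> 'a) \<Rightarrow> 'a \<Rightarrow> 'a \<Rightarrow> real" where
  "two_point_entropy_flux v psi h a b =
     (1/2) * ((v a + v b) \<bullet> h a b) - (1/2) * (psi a + psi b)"

definition Zset :: "int \<Rightarrow> int \<Rightarrow> int set" where
  "Zset p z = {-z+1..2*p-z}"

definition Zset' :: "int \<Rightarrow> int \<Rightarrow> int set" where
  "Zset' p z = {-z..2*p-z}"

definition Atilde :: "int \<Rightarrow> int \<Rightarrow> (int \<Rightarrow> int \<Rightarrow> real) \<Rightarrow> int \<Rightarrow> int \<Rightarrow> real" where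
  "Atilde p z A l m =
     (if l + 1 \<in> Zset p z \<and> m + 1 \<in> Zset p z then A (l+1) (m+1) else 0)"

definition vcoef :: "int \<Rightarrow> int \<Rightarrow> (int \<Rightarrow> int \<Rightarrow> real) \<Rightarrow> (int \<Rightarrow> int \<Rightarrow> real) \<Rightarrow> int \<Rightarrow> real" where
  "vcoef p z A B m = (B 0 m - Atilde p z A 0 m) + (B m 0 - Atilde p z A m 0)"

definition ec_flux_combination ::
  "int \<Rightarrow> int \<Rightarrow> (int \<Rightarrow> int \<Rightarrow> real) \<Rightarrow> (int \<Rightarrow> int \<Rightarrow> real) \<Rightarrow> bool" where
  "ec_flux_combination p z A B \<longleftrightarrow>
     (\<Sum>(l,m)\<in>Zset' p z \<times> Zset' p z. Atilde p z A l m) = 1 \<and>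
     (\<Sum>(l,m)\<in>Zset' p z \<times> Zset' p z. B l m) = 1 \<and>
     (\<forall>l\<in>Zset' p z - {0}. \<forall>m\<in>Zset' p z - {0}. Atilde p z A l m = B l m) \<and>
     (\<forall>l\<in>Zset p z. A l l = 0) \<and>
     vcoef p z A B 0 = 0"

text \<open>The families phi_lm (used with fluxes g,h) and Phi_lm (used with entropy fluxes G,H).\<close>
definition mixfam :: "real \<Rightarrow> ('a \<Rightarrow> 'a \<Rightarrow> 'b::real_vector) \<Rightarrow> ('a \<Rightarrow> 'a \<Rightarrow> 'b) \<Rightarrow>
    int \<Rightarrow> int \<Rightarrow> 'a \<Rightarrow> 'a \<Rightarrow> 'b" where
  "mixfam \<alpha> g h l m a b =
     (if (l,m) = (0,1) then \<alpha> *\<^sub>R g a b + (1-\<alpha>) *\<^sub>R h a b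
      else if (l,m) = (1,0) then \<alpha> *\<^sub>R g b a + (1-\<alpha>) *\<^sub>R h a b
      else h a b)"

definition flux_left :: "int \<Rightarrow> int \<Rightarrow> (int \<Rightarrow> int \<Rightarrow> real) \<Rightarrow>
    (int \<Rightarrow> int \<Rightarrow> 'a \<Rightarrow> 'a \<Rightarrow> 'b::real_vector) \<Rightarrow> (int \<Rightarrow> 'a) \<Rightarrow> int \<Rightarrow> 'b" where
  "flux_left p z A \<phi> u k =
     (\<Sum>(l,m)\<in>Zset p z \<times> Zset p z. A l m *\<^sub>R \<phi> l m (u (k-1+l)) (u (k-1+m)))"

definition flux_right :: "int \<Rightarrow> int \<Rightarrow> (int \<Rightarrow> int \<Rightarrow> real) \<Rightarrow>
    (int \<Rightarrow> int \<Rightarrow> 'a \<Rightarrow> 'a \<Rightarrow> 'b::real_vector) \<Rightarrow> (int \<Rightarrow> 'a) \<Rightarrow> int \<Rightarrow> 'b" where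
  "flux_right p z B \<phi> u k =
     (\<Sum>(l,m)\<in>Zset' p z \<times> Zset' p z. B l m *\<^sub>R \<phi> l m (u (k+l)) (u (k+m)))"

end

theory Submission
  imports Defs
begin

text \<open>
  Measure both sides against the cell state by the residual \<open>v(u\<^sub>k) \<bullet> \<phi> - \<Phi>\<close>.
  For the pure \<open>h\<close>-scheme the left and right residuals coincide: shifting the left
  stencil by one cell turns \<open>A\<close> into \<open>\<tilde>A\<close>, which agrees with \<open>B\<close> off the row and
  column through \<open>0\<close>, while on that cross every residual equals \<open>\<psi>(u\<^sub>k)\<close> by entropy
  conservation of \<open>h\<close>; since \<open>\<Sum>\<tilde>A = \<Sum>B\<close>, the two sums cancel. Mixing \<open>g\<close> into
  the interface terms \<open>(0,1)\<close> and \<open>(1,0)\<close>, whose stencils contain \<open>u\<^sub>k\<close>, can only lower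
  the left and raise the right residual, because \<open>g\<close> is entropy dissipative and these
  weights are nonnegative. The semi-discrete inequality is then the chain rule for
  \<open>U(u\<^sub>k(t))\<close>.
\<close>

lemma entropy_conservative_residual_fst:
  assumes "entropy_conservative v psi h"
  shows "v a \<bullet> h a b - two_point_entropy_flux v psi h a b = psi a"
proof -
  have "(v b - v a) \<bullet> h a b = psi b - psi a"
    using assms unfolding entropy_conservative_def by blast
  then show ?thesis
    unfolding two_point_entropy_flux_def by (simp add: inner_diff_left inner_add_left field_simps)
qed

lemma entropy_conservative_residual_snd:
  assumes "entropy_conservative v psi h"
  shows "v b \<bullet> h a b - two_point_entropy_flux v psi h a b = psi b"
proof -
  have "(v b - v a) \<bullet> h a b = psi b - psi a"
    using assms unfolding entropy_conservative_def by blast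
  then show ?thesis
    unfolding two_point_entropy_flux_def by (simp add: inner_diff_left inner_add_left field_simps)
qed

lemma entropy_dissipative_residual_fst:
  assumes "entropy_dissipative v psi g"
  shows "psi a \<le> v a \<bullet> g a b - two_point_entropy_flux v psi g a b"
proof -
  have "(v b - v a) \<bullet> g a b - (psi b - psi a) \<le> 0"
    using assms unfolding entropy_dissipative_def by blast
  then show ?thesis
    unfolding two_point_entropy_flux_def by (simp add: inner_diff_left inner_add_left field_simps)
qed

lemma entropy_dissipative_residual_snd:
  assumes "entropy_dissipative v psi g"
  shows "v b \<bullet> g a b - two_point_entropy_flux v psi g a b \<le> psi b"
proof -
  have "(v b - v a) \<bullet> g a b - (psi b - psi a) \<le> 0"
    using assms unfolding entropy_dissipative_def by blast
  then show ?thesis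
    unfolding two_point_entropy_flux_def by (simp add: inner_diff_left inner_add_left field_simps)
qed

lemma mixfam_residual:
  fixes w :: "'a::real_inner"
  shows "w \<bullet> mixfam \<alpha> g h l m a b - mixfam \<alpha> G H l m a b =
    (if (l, m) = (0, 1) then \<alpha> * (w \<bullet> g a b - G a b) + (1 - \<alpha>) * (w \<bullet> h a b - H a b)
     else if (l, m) = (1, 0) then \<alpha> * (w \<bullet> g b a - G b a) + (1 - \<alpha>) * (w \<bullet> h a b - H a b)
     else w \<bullet> h a b - H a b)"
  by (simp add: mixfam_def inner_add_right algebra_simps)

lemma mixfam_residual_le:
  assumes h: "entropy_conservative v psi h" and g: "entropy_dissipative v psi g"
    and "0 \<le> \<alpha>" "\<alpha> \<le> 1"
    and b: "(l, m) = (0, 1) \<Longrightarrow> b = c" and a: "(l, m) = (1, 0) \<Longrightarrow> a = c"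
  defines "G \<equiv> two_point_entropy_flux v psi g" and "H \<equiv> two_point_entropy_flux v psi h"
  shows "v c \<bullet> mixfam \<alpha> g h l m a b - mixfam \<alpha> G H l m a b \<le> v c \<bullet> h a b - H a b"
proof -
  have "\<alpha> * x + (1 - \<alpha>) * y \<le> y" if "x \<le> y" for x y :: real
    using convex_bound_le[OF that order_refl, of \<alpha> "1 - \<alpha>"] \<open>0 \<le> \<alpha>\<close> \<open>\<alpha> \<le> 1\<close> by simp
  then show ?thesis
    using a b entropy_dissipative_residual_snd[OF g] entropy_conservative_residual_fst[OF h]
      entropy_conservative_residual_snd[OF h]
    unfolding mixfam_residual G_def H_def by auto
qed

lemma mixfam_residual_ge:
  assumes h: "entropy_conservative v psi h" and g: "entropy_dissipative v psi g"
    and "0 \<le> \<alpha>" "\<alpha> \<le> 1"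
    and a: "(l, m) = (0, 1) \<Longrightarrow> a = c" and b: "(l, m) = (1, 0) \<Longrightarrow> b = c"
  defines "G \<equiv> two_point_entropy_flux v psi g" and "H \<equiv> two_point_entropy_flux v psi h"
  shows "v c \<bullet> h a b - H a b \<le> v c \<bullet> mixfam \<alpha> g h l m a b - mixfam \<alpha> G H l m a b"
proof -
  have "y \<le> \<alpha> * x + (1 - \<alpha>) * y" if "y \<le> x" for x y :: real
    using convex_bound_le[of "- x" "- y" "- y" \<alpha> "1 - \<alpha>"] that \<open>0 \<le> \<alpha>\<close> \<open>\<alpha> \<le> 1\<close> by simp
  then show ?thesis
    using a b entropy_dissipative_residual_fst[OF g] entropy_conservative_residual_fst[OF h]
      entropy_conservative_residual_snd[OF h]
    unfolding mixfam_residual G_def H_def by auto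
qed

lemma inner_flux_left_diff:
  "c \<bullet> flux_left p z A \<phi> u k - flux_left p z A \<Phi> u k
     = flux_left p z A (\<lambda>l m a b. c \<bullet> \<phi> l m a b - \<Phi> l m a b) u k"
  unfolding flux_left_def inner_sum_right sum_subtractf[symmetric]
  by (rule sum.cong) (auto simp: algebra_simps)

lemma inner_flux_right_diff:
  "c \<bullet> flux_right p z B \<phi> u k - flux_right p z B \<Phi> u k
     = flux_right p z B (\<lambda>l m a b. c \<bullet> \<phi> l m a b - \<Phi> l m a b) u k"
  unfolding flux_right_def inner_sum_right sum_subtractf[symmetric]
  by (rule sum.cong) (auto simp: algebra_simps)

lemma flux_left_eq_Atilde_sum:
  "flux_left p z A \<phi> u k =
     (\<Sum>(l, m)\<in>Zset' p z \<times> Zset' p z. Atilde p z A l m *\<^sub>R \<phi> (l + 1) (m + 1) (u (k + l)) (u (k + m)))"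
proof -
  define shift :: "int \<times> int \<Rightarrow> int \<times> int" where "shift = (\<lambda>(l, m). (l - 1, m - 1))"
  define F where "F = (\<lambda>(l, m). Atilde p z A l m *\<^sub>R \<phi> (l + 1) (m + 1) (u (k + l)) (u (k + m)))"
  let ?Z = "Zset p z \<times> Zset p z" and ?Z' = "Zset' p z \<times> Zset' p z"
  have "inj_on shift ?Z"
    unfolding shift_def inj_on_def by auto
  have shift_Z: "shift ` ?Z = ?Z' \<inter> {(l, m). l + 1 \<in> Zset p z \<and> m + 1 \<in> Zset p z}"
    unfolding shift_def Zset_def Zset'_def by (auto simp: image_iff) presburger+
  have "flux_left p z A \<phi> u k = (\<Sum>x\<in>?Z. F (shift x))"
    unfolding flux_left_def
    by (rule sum.cong) (auto simp: F_def shift_def Atilde_def algebra_simps)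
  also have "\<dots> = sum F (shift ` ?Z)"
    by (simp add: sum.reindex[OF \<open>inj_on shift ?Z\<close>])
  also have "\<dots> = sum F ?Z'"
    unfolding shift_Z
    by (rule sum.mono_neutral_left) (auto simp: F_def Atilde_def Zset'_def split: if_splits)
  finally show ?thesis
    by (simp add: F_def)
qed

lemma ec_flux_combination_sum_eq:
  assumes AB: "ec_flux_combination p z A B" and cross: "\<And>l m. l = 0 \<or> m = 0 \<Longrightarrow> w l m = c"
  shows "(\<Sum>(l, m)\<in>Zset' p z \<times> Zset' p z. Atilde p z A l m * w l m)
       = (\<Sum>(l, m)\<in>Zset' p z \<times> Zset' p z. B l m * w l m)"
proof -
  let ?Z' = "Zset' p z \<times> Zset' p z"
  have sums: "(\<Sum>(l, m)\<in>?Z'. Atilde p z A l m) = 1" "(\<Sum>(l, m)\<in>?Z'. B l m) = 1"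
    and agree: "\<And>l m. l \<in> Zset' p z - {0} \<Longrightarrow> m \<in> Zset' p z - {0} \<Longrightarrow> Atilde p z A l m = B l m"
    using AB unfolding ec_flux_combination_def by auto
  have "(\<Sum>(l, m)\<in>?Z'. Atilde p z A l m * w l m) - (\<Sum>(l, m)\<in>?Z'. B l m * w l m)
      = (\<Sum>(l, m)\<in>?Z'. (Atilde p z A l m - B l m) * w l m)"
    unfolding sum_subtractf[symmetric] by (rule sum.cong) (auto simp: algebra_simps)
  also have "\<dots> = (\<Sum>(l, m)\<in>?Z'. (Atilde p z A l m - B l m) * c)"
  proof (rule sum.cong)
    show "(case x of (l, m) \<Rightarrow> (Atilde p z A l m - B l m) * w l m)
        = (case x of (l, m) \<Rightarrow> (Atilde p z A l m - B l m) * c)" if "x \<in> ?Z'" for x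
      using that by (cases "fst x = 0 \<or> snd x = 0") (auto simp: cross agree)
  qed simp
  also have "\<dots> = ((\<Sum>(l, m)\<in>?Z'. Atilde p z A l m) - (\<Sum>(l, m)\<in>?Z'. B l m)) * c"
    unfolding sum_distrib_right sum_subtractf[symmetric] by (rule sum.cong) auto
  also have "\<dots> = 0"
    using sums by simp
  finally show ?thesis
    by simp
qed

lemma ec_flux_combination_entropy_conservative:
  assumes AB: "ec_flux_combination p z A B" and h: "entropy_conservative v psi h"
  defines "H \<equiv> two_point_entropy_flux v psi h"
  shows "v (u k) \<bullet> (flux_left p z A (\<lambda>_ _. h) u k - flux_right p z B (\<lambda>_ _. h) u k)
       = flux_left p z A (\<lambda>_ _. H) u k - flux_right p z B (\<lambda>_ _. H) u k"
proof -
  define w where "w l m = v (u k) \<bullet> h (u (k + l)) (u (k + m)) - H (u (k + l)) (u (k + m))" for l m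
  have cross: "w l m = psi (u k)" if "l = 0 \<or> m = 0" for l m
    using that entropy_conservative_residual_fst[OF h] entropy_conservative_residual_snd[OF h]
    unfolding w_def H_def by auto
  define r where "r = (\<lambda>(_::int) (_::int) a b. v (u k) \<bullet> h a b - H a b)"
  have "flux_left p z A r u k = (\<Sum>(l, m)\<in>Zset' p z \<times> Zset' p z. Atilde p z A l m * w l m)"
    by (simp add: flux_left_eq_Atilde_sum r_def w_def)
  also have "\<dots> = (\<Sum>(l, m)\<in>Zset' p z \<times> Zset' p z. B l m * w l m)"
    using ec_flux_combination_sum_eq[OF AB cross] .
  also have "\<dots> = flux_right p z B r u k"
    by (simp add: flux_right_def r_def w_def)
  finally have "v (u k) \<bullet> flux_left p z A (\<lambda>_ _. h) u k - flux_left p z A (\<lambda>_ _. H) u k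
              = v (u k) \<bullet> flux_right p z B (\<lambda>_ _. h) u k - flux_right p z B (\<lambda>_ _. H) u k"
    unfolding inner_flux_left_diff inner_flux_right_diff r_def .
  then show ?thesis
    by (simp add: inner_diff_right)
qed

lemma mixfam_flux_entropy_inequality:
  assumes AB: "ec_flux_combination p z A B"
    and h: "entropy_conservative v psi h" and g: "entropy_dissipative v psi g"
    and \<alpha>: "0 \<le> \<alpha>" "\<alpha> \<le> 1"
    and A01: "A 0 1 \<ge> 0" and A10: "A 1 0 \<ge> 0" and B01: "B 0 1 \<ge> 0" and B10: "B 1 0 \<ge> 0"
  defines "G \<equiv> two_point_entropy_flux v psi g" and "H \<equiv> two_point_entropy_flux v psi h"
  shows "v (u k) \<bullet> (flux_left p z A (mixfam \<alpha> g h) u k - flux_right p z B (mixfam \<alpha> g h) u k)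
       \<le> flux_left p z A (mixfam \<alpha> G H) u k - flux_right p z B (mixfam \<alpha> G H) u k"
proof -
  define r_mix where "r_mix = (\<lambda>l m a b. v (u k) \<bullet> mixfam \<alpha> g h l m a b - mixfam \<alpha> G H l m a b)"
  define r_h where "r_h = (\<lambda>(_::int) (_::int) a b. v (u k) \<bullet> h a b - H a b)"
  have mixfam_eq: "mixfam \<alpha> \<phi> \<psi> l m = \<psi>" if "(l, m) \<notin> {(0, 1), (1, 0)}"
    for \<phi> \<psi> :: "'a \<Rightarrow> 'a \<Rightarrow> 'b::real_vector" and l m
    using that by (auto simp: mixfam_def fun_eq_iff)
  have "flux_left p z A r_mix u k \<le> flux_left p z A r_h u k"
    unfolding flux_left_def real_scaleR_def
  proof (rule sum_mono, clarify)
    fix l m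
    have "A l m * r_mix l m (u (k - 1 + l)) (u (k - 1 + m)) \<le> A l m * r_h l m (u (k - 1 + l)) (u (k - 1 + m))"
      if "(l, m) \<in> {(0, 1), (1, 0)}"
      using that A01 A10 mixfam_residual_le[OF h g \<alpha>, of l m "u (k - 1 + m)" "u k" "u (k - 1 + l)"]
      by (auto intro!: mult_left_mono simp: r_mix_def r_h_def G_def H_def)
    then show "A l m * r_mix l m (u (k - 1 + l)) (u (k - 1 + m)) \<le> A l m * r_h l m (u (k - 1 + l)) (u (k - 1 + m))"
      by (cases "(l, m) \<in> {(0, 1), (1, 0)}") (simp_all add: r_mix_def r_h_def mixfam_eq)
  qed
  moreover have "flux_right p z B r_h u k \<le> flux_right p z B r_mix u k"
    unfolding flux_right_def real_scaleR_def
  proof (rule sum_mono, clarify)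
    fix l m
    have "B l m * r_h l m (u (k + l)) (u (k + m)) \<le> B l m * r_mix l m (u (k + l)) (u (k + m))"
      if "(l, m) \<in> {(0, 1), (1, 0)}"
      using that B01 B10 mixfam_residual_ge[OF h g \<alpha>, of l m "u (k + l)" "u k" "u (k + m)"]
      by (auto intro!: mult_left_mono simp: r_mix_def r_h_def G_def H_def)
    then show "B l m * r_h l m (u (k + l)) (u (k + m)) \<le> B l m * r_mix l m (u (k + l)) (u (k + m))"
      by (cases "(l, m) \<in> {(0, 1), (1, 0)}") (simp_all add: r_mix_def r_h_def mixfam_eq)
  qed
  moreover have "flux_left p z A r_h u k = flux_right p z B r_h u k"
    using ec_flux_combination_entropy_conservative[OF AB h, of u k]
    unfolding r_h_def H_def inner_diff_right
    by (simp add: inner_flux_left_diff[symmetric] inner_flux_right_diff[symmetric])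
  moreover have "v (u k) \<bullet> (flux_left p z A (mixfam \<alpha> g h) u k - flux_right p z B (mixfam \<alpha> g h) u k)
      - (flux_left p z A (mixfam \<alpha> G H) u k - flux_right p z B (mixfam \<alpha> G H) u k)
      = flux_left p z A r_mix u k - flux_right p z B r_mix u k"
    unfolding r_mix_def inner_flux_left_diff[symmetric] inner_flux_right_diff[symmetric]
    by (simp add: inner_diff_right)
  ultimately show ?thesis
    by linarith
qed

lemma has_real_derivative_comp_gradient_unique:
  assumes x: "(x has_vector_derivative X) (at t)"
    and U: "(U has_derivative (\<lambda>w. v \<bullet> w)) (at (x t))"
    and D: "((\<lambda>s. U (x s)) has_real_derivative D) (at t)"
  shows "D = v \<bullet> X"
proof -
  have "((\<lambda>s. U (x s)) has_real_derivative v \<bullet> X) (at t)"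
    using vector_derivative_diff_chain_within[OF x has_derivative_at_withinI[OF U]]
    by (simp add: o_def has_real_derivative_iff_has_vector_derivative)
  then show ?thesis
    using D DERIV_unique by blast
qed

theorem mainTheorem4:
  fixes f :: "'a::euclidean_space \<Rightarrow> 'a" and f' :: "'a \<Rightarrow> 'a \<Rightarrow> 'a"
    and U :: "'a \<Rightarrow> real" and F :: "'a \<Rightarrow> real" and v :: "'a \<Rightarrow> 'a"
    and h g :: "'a \<Rightarrow> 'a \<Rightarrow> 'a"
    and A B :: "int \<Rightarrow> int \<Rightarrow> real"
    and p z :: int and \<alpha> dx :: real
  assumes f_diff: "\<And>x. (f has_derivative f' x) (at x)"
      and U_grad: "\<And>x. (U has_derivative (\<lambda>w. v x \<bullet> w)) (at x)"
      and U_strict_convex: "strictly_convex_on UNIV U"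
      and F_entropy_flux: "\<And>x. (F has_derivative (\<lambda>w. v x \<bullet> f' x w)) (at x)"
      and dx_pos: "dx > 0"
      and p_ge: "p \<ge> 1" and z_ge: "1 \<le> z" and z_le: "z \<le> 2*p - 1"
      and h_ec: "entropy_conservative v (potential v f F) h"
      and h_sym: "symmetric_flux h"
      and h_cons: "consistent_flux f h"
      and h_smooth: "\<And>a b. (\<lambda>q. h (fst q) (snd q)) differentiable (at (a, b))"
      and AB: "ec_flux_combination p z A B"
      and g_ed: "entropy_dissipative v (potential v f F) g"
      and \<alpha>_ge: "0 \<le> \<alpha>" and \<alpha>_le: "\<alpha> \<le> 1"
      and A01: "A 0 1 \<ge> 0" and A10: "A 1 0 \<ge> 0"
      and B01: "B 0 1 \<ge> 0" and B10: "B 1 0 \<ge> 0"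
  shows
   "(\<forall>(u::int \<Rightarrow> 'a) k.
       v (u k) \<bullet> (flux_left p z A (mixfam \<alpha> g h) u k - flux_right p z B (mixfam \<alpha> g h) u k)
       \<le> flux_left p z A (mixfam \<alpha> (two_point_entropy_flux v (potential v f F) g)
                                   (two_point_entropy_flux v (potential v f F) h)) u k
         - flux_right p z B (mixfam \<alpha> (two_point_entropy_flux v (potential v f F) g)
                                   (two_point_entropy_flux v (potential v f F) h)) u k)
    \<and>
    (\<forall>(u::int \<Rightarrow> real \<Rightarrow> 'a) t k.
       (\<forall>j. (u j has_vector_derivative
               (1/dx) *\<^sub>R (flux_left p z A (mixfam \<alpha> g h) (\<lambda>i. u i t) j
                           - flux_right p z B (mixfam \<alpha> g h) (\<lambda>i. u i t) j)) (at t))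
       \<longrightarrow> (\<forall>D. ((\<lambda>s. U (u k s)) has_real_derivative D) (at t) \<longrightarrow>
              D \<le> (1/dx) * (flux_left p z A (mixfam \<alpha> (two_point_entropy_flux v (potential v f F) g)
                                   (two_point_entropy_flux v (potential v f F) h)) (\<lambda>i. u i t) k
                 - flux_right p z B (mixfam \<alpha> (two_point_entropy_flux v (potential v f F) g)
                                   (two_point_entropy_flux v (potential v f F) h)) (\<lambda>i. u i t) k)))"
proof (intro conjI allI impI)
  let ?G = "two_point_entropy_flux v (potential v f F) g"
    and ?H = "two_point_entropy_flux v (potential v f F) h"
  note entropy_inequality =
    mixfam_flux_entropy_inequality[OF AB h_ec g_ed \<alpha>_ge \<alpha>_le A01 A10 B01 B10]
  show "v (u k) \<bullet> (flux_left p z A (mixfam \<alpha> g h) u k - flux_right p z B (mixfam \<alpha> g h) u k)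
      \<le> flux_left p z A (mixfam \<alpha> ?G ?H) u k - flux_right p z B (mixfam \<alpha> ?G ?H) u k" for u k
    by (rule entropy_inequality)
  fix u :: "int \<Rightarrow> real \<Rightarrow> 'a" and t k D
  let ?u = "\<lambda>i. u i t"
  assume ode: "\<forall>j. (u j has_vector_derivative
            (1/dx) *\<^sub>R (flux_left p z A (mixfam \<alpha> g h) ?u j - flux_right p z B (mixfam \<alpha> g h) ?u j)) (at t)"
    and D: "((\<lambda>s. U (u k s)) has_real_derivative D) (at t)"
  have "D = (1/dx) * (v (?u k) \<bullet> (flux_left p z A (mixfam \<alpha> g h) ?u k - flux_right p z B (mixfam \<alpha> g h) ?u k))"
    using has_real_derivative_comp_gradient_unique[OF spec[OF ode, of k] U_grad D]
    by (simp add: inner_scaleR_right)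
  also have "\<dots> \<le> (1/dx) * (flux_left p z A (mixfam \<alpha> ?G ?H) ?u k - flux_right p z B (mixfam \<alpha> ?G ?H) ?u k)"
    using entropy_inequality[of ?u k] dx_pos by (intro mult_left_mono) auto
  finally show "D \<le> (1/dx) * (flux_left p z A (mixfam \<alpha> ?G ?H) ?u k - flux_right p z B (mixfam \<alpha> ?G ?H) ?u k)" .
qed

end
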